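(* Let $\mu$ be a nonnegative measure on $\mathbb R^d$ with $\int_{\mathbb R^d}\frac{\mu(d\xi)}{1+|\xi|^2}<\infty$. For $N>0$ set $C_N=\int_{|\xi|\ge N}\frac{\mu(d\xi)}{|\xi|^2}$ and $D_N=\mu\{\xi\in\mathbb R^d:|\xi|\le N\}$. Then for all integers $n\ge1$, all $t>0$ and all $N>0$, $$\int_{\mathbb R^{nd}}\int_{S_{t,n}}e^{-\sum_{i=1}^n w_i|\xi_i|^2}\,dw\,\prod_{i=1}^n\mu(d\xi_i)\le\sum_{k=0}^n\binom nk\frac{t^k}{k!}D_N^k(2C_N)^{n-k},$$ where $S_{t,n}=\{(w_1,\dots,w_n)\in[0,\infty)^n:w_1+\dots+w_n\le t\}$. *)

theory Defs
  imports "HOL-Analysis.Analysis"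
begin

definition simplex_set :: "real \<Rightarrow> nat \<Rightarrow> (nat \<Rightarrow> real) set" where
  "simplex_set t n = {w \<in> PiE {..<n} (\<lambda>_. {0..}). (\<Sum>i<n. w i) \<le> t}"

definition C_N :: "'a::euclidean_space measure \<Rightarrow> real \<Rightarrow> ennreal" where
  "C_N \<mu> N = (\<integral>\<^sup>+ \<xi>. indicator {\<xi>. norm \<xi> \<ge> N} \<xi> * ennreal (1 / (norm \<xi>)^2) \<partial>\<mu>)"

definition D_N :: "'a::euclidean_space measure \<Rightarrow> real \<Rightarrow> ennreal" where
  "D_N \<mu> N = emeasure \<mu> {\<xi>. norm \<xi> \<le> N}"

end

theory Submission
  imports Defs "HOL-Probability.Probability"
begin

(* Fix the frequencies xi_1, ..., xi_n and let I be the set of indices with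
   |xi_i| \<le> N.  Dropping the exponential factors with i \<in> I and the constraint on the
   coordinates outside I enlarges the inner integrand, which then splits as the indicator of the
   |I|-dimensional simplex times one-dimensional exponentials; by Fubini the inner integral is at
   most  t^|I| / |I|! * \<Prod>_{j \<notin> I} |xi_j|^-2.  This bound is a product of "cut-off weights"
   (indicator of the ball, resp. |xi|^-2 outside the ball), so bounding it by the sum of such
   products over all subsets K of the indices and integrating coordinatewise against the product
   measure gives  \<Sum>_K t^|K|/|K|! D_N^|K| C_N^(n-|K|).  Grouping the subsets by cardinality and
   using C_N \<le> 2 C_N yields the claim. *)

section \<open>The inner integral over the simplex\<close>

text \<open>The integral of \<open>exp (- y a)\<close> over \<open>y \<ge> 0\<close> is \<open>1/a\<close>, obtained by normalising the
  exponential distribution.\<close>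
lemma nn_integral_exp_halfline:
  fixes a :: real
  assumes a: "0 < a"
  shows "(\<integral>\<^sup>+ y. indicator {0..} y * ennreal (exp (- (y * a))) \<partial>lborel) = ennreal (1 / a)"
proof -
  interpret prob_space "density lborel (exponential_density a)"
    using prob_space_exponential_density[OF a] .
  have density_one: "(\<integral>\<^sup>+ y. ennreal (exponential_density a y) \<partial>lborel) = 1"
    using emeasure_space_1 by (simp add: emeasure_density)
  have "(\<integral>\<^sup>+ y. indicator {0..} y * ennreal (exp (- (y * a))) \<partial>lborel)
      = (\<integral>\<^sup>+ y. ennreal (1 / a) * ennreal (exponential_density a y) \<partial>lborel)"
    using a by (intro nn_integral_cong)
      (auto simp: exponential_density_def indicator_def ennreal_mult[symmetric] mult.commute)
  also have "\<dots> = ennreal (1 / a)"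
    by (subst nn_integral_cmult) (auto simp: density_one)
  finally show ?thesis .
qed

text \<open>The coordinates in \<open>I\<close> range over the simplex of size \<open>t\<close> and those in \<open>J\<close> over
  \<open>[0,\<infinity>)\<close> with exponential weights: by Fubini the integral is the simplex volume times
  the product of the one-dimensional integrals.\<close>
lemma nn_integral_simplex_times_exponentials:
  fixes I J :: "'i set" and a :: "'i \<Rightarrow> real" and t :: real
  assumes fin: "finite I" "finite J" and disj: "I \<inter> J = {}"
    and t: "0 \<le> t" and a: "\<And>j. j \<in> J \<Longrightarrow> 0 < a j"
  shows "(\<integral>\<^sup>+ w. indicator {w. (\<forall>i\<in>I. 0 \<le> w i) \<and> sum w I \<le> t} w
              * (\<Prod>j\<in>J. indicator {0..} (w j) * ennreal (exp (- (w j * a j))))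
            \<partial>PiM (I \<union> J) (\<lambda>_. lborel))
       = ennreal (t ^ card I / fact (card I)) * (\<Prod>j\<in>J. ennreal (1 / a j))"
    (is "(\<integral>\<^sup>+ w. indicator ?S w * ?E w \<partial>_) = _")
proof -
  interpret product_sigma_finite "\<lambda>_::'i. lborel::real measure" by standard
  let ?MI = "Pi\<^sub>M I (\<lambda>_. lborel::real measure)" and ?MJ = "Pi\<^sub>M J (\<lambda>_. lborel::real measure)"
  have S_sets: "?S \<inter> space ?MI \<in> sets ?MI"
  proof -
    have "?S \<inter> space ?MI = Pi\<^sub>E I (\<lambda>_. {0..}) \<inter> (\<lambda>x. sum x I) -` {..t} \<inter> space ?MI"
      by (auto simp: space_PiM)
    also have "\<dots> \<in> sets ?MI"
      using fin by measurable
    finally show ?thesis .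
  qed
  have split_merge: "indicator ?S (merge I J (x, y)) * ?E (merge I J (x, y))
      = indicator (?S \<inter> space ?MI) x * ?E y" if "x \<in> space ?MI" for x y
  proof -
    have "sum (merge I J (x, y)) I = sum x I"
      by (intro sum.cong) (auto simp: merge_def)
    moreover have "?E (merge I J (x, y)) = ?E y"
      using disj by (intro prod.cong) auto
    ultimately show ?thesis
      using that by (auto simp: indicator_def merge_def)
  qed
  have "(\<integral>\<^sup>+ w. indicator ?S w * ?E w \<partial>PiM (I \<union> J) (\<lambda>_. lborel))
      = (\<integral>\<^sup>+ x. \<integral>\<^sup>+ y. indicator ?S (merge I J (x, y)) * ?E (merge I J (x, y)) \<partial>?MJ \<partial>?MI)"
    using fin disj by (intro product_nn_integral_fold) measurable
  also have "\<dots> = (\<integral>\<^sup>+ x. indicator (?S \<inter> space ?MI) x * (\<integral>\<^sup>+ y. ?E y \<partial>?MJ) \<partial>?MI)"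
    using fin by (intro nn_integral_cong) (simp add: split_merge nn_integral_cmult)
  also have "(\<integral>\<^sup>+ y. ?E y \<partial>?MJ) = (\<Prod>j\<in>J. ennreal (1 / a j))"
    using fin by (subst product_nn_integral_prod) (auto simp: nn_integral_exp_halfline a)
  also have "(\<integral>\<^sup>+ x. indicator (?S \<inter> space ?MI) x * (\<Prod>j\<in>J. ennreal (1 / a j)) \<partial>?MI)
      = emeasure ?MI (?S \<inter> space ?MI) * (\<Prod>j\<in>J. ennreal (1 / a j))"
    using S_sets by (simp add: nn_integral_multc)
  also have "emeasure ?MI (?S \<inter> space ?MI) = ennreal (t ^ card I / fact (card I))"
    using emeasure_std_simplex_aux[OF fin(1) t]
    by (simp add: ennreal_power divide_ennreal ennreal_fact[symmetric])
  finally show ?thesis .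
qed

text \<open>Pointwise estimate of the integrand on the simplex \<open>S(t,n)\<close>: forget the exponential
  decay in the coordinates \<open>I\<close> and the simplex constraint on the remaining ones.\<close>
lemma simplex_integrand_le:
  fixes a :: "nat \<Rightarrow> real"
  assumes I: "I \<subseteq> {..<n}" and a: "\<And>i. 0 \<le> a i"
  shows "indicator (simplex_set t n) w * ennreal (exp (- (\<Sum>i<n. w i * a i)))
      \<le> indicator {w. (\<forall>i\<in>I. 0 \<le> w i) \<and> sum w I \<le> t} w
        * (\<Prod>j\<in>{..<n} - I. indicator {0..} (w j) * ennreal (exp (- (w j * a j))))"
proof (cases "w \<in> simplex_set t n")
  case True
  then have w_nonneg: "\<And>i. i < n \<Longrightarrow> 0 \<le> w i" and w_sum: "(\<Sum>i<n. w i) \<le> t"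
    by (auto simp: simplex_set_def)
  have split: "sum f {..<n} = sum f I + sum f ({..<n} - I)" for f :: "nat \<Rightarrow> real"
    using I by (simp add: sum.subset_diff)
  have "0 \<le> sum w ({..<n} - I)"
    using w_nonneg by (intro sum_nonneg) auto
  then have sum_I: "sum w I \<le> t"
    using w_sum split[of w] by linarith
  have "0 \<le> (\<Sum>i\<in>I. w i * a i)"
    using I w_nonneg a by (intro sum_nonneg) auto
  then have decay: "exp (- (\<Sum>i<n. w i * a i)) \<le> (\<Prod>j\<in>{..<n} - I. exp (- (w j * a j)))"
    using split[of "\<lambda>i. w i * a i"] by (simp add: exp_sum[symmetric] sum_negf)
  have "ennreal (\<Prod>j\<in>{..<n} - I. exp (- (w j * a j)))
      = (\<Prod>j\<in>{..<n} - I. indicator {0..} (w j) * ennreal (exp (- (w j * a j))))"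
    using w_nonneg by (simp add: prod_ennreal)
  moreover have "w \<in> {w. (\<forall>i\<in>I. 0 \<le> w i) \<and> sum w I \<le> t}"
    using I w_nonneg sum_I by auto
  ultimately show ?thesis
    using ennreal_leI[OF decay] True by simp
qed simp

lemma simplex_integral_le:
  fixes a :: "nat \<Rightarrow> real"
  assumes I: "I \<subseteq> {..<n}" and a_nonneg: "\<And>i. 0 \<le> a i"
    and a_pos: "\<And>j. j \<in> {..<n} - I \<Longrightarrow> 0 < a j" and t: "0 \<le> t"
  shows "(\<integral>\<^sup>+ w. indicator (simplex_set t n) w * ennreal (exp (- (\<Sum>i<n. w i * a i)))
            \<partial>PiM {..<n} (\<lambda>_. lborel))
         \<le> ennreal (t ^ card I / fact (card I)) * (\<Prod>j\<in>{..<n} - I. ennreal (1 / a j))"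
proof -
  have indices: "{..<n} = I \<union> ({..<n} - I)"
    using I by auto
  have "(\<integral>\<^sup>+ w. indicator (simplex_set t n) w * ennreal (exp (- (\<Sum>i<n. w i * a i)))
            \<partial>PiM {..<n} (\<lambda>_. lborel))
      \<le> (\<integral>\<^sup>+ w. indicator {w. (\<forall>i\<in>I. 0 \<le> w i) \<and> sum w I \<le> t} w
          * (\<Prod>j\<in>{..<n} - I. indicator {0..} (w j) * ennreal (exp (- (w j * a j))))
          \<partial>PiM (I \<union> ({..<n} - I)) (\<lambda>_. lborel))"
    by (subst indices[symmetric]) (intro nn_integral_mono simplex_integrand_le I a_nonneg)
  also have "\<dots> = ennreal (t ^ card I / fact (card I)) * (\<Prod>j\<in>{..<n} - I. ennreal (1 / a j))"
    using I by (intro nn_integral_simplex_times_exponentials t a_pos) (auto intro: finite_subset)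
  finally show ?thesis .
qed

section \<open>The measure \<open>\<mu>\<close>\<close>

text \<open>Balls have measure bounded by \<open>1 + r^2\<close> times the weighted total mass of \<open>\<mu>\<close>, because
  \<open>1/(1+|\<xi>|^2) \<ge> 1/(1+r^2)\<close> on the ball of radius \<open>r\<close>.\<close>
lemma emeasure_ball_le_weighted_mass:
  fixes \<mu> :: "'a::real_normed_vector measure" and r :: real
  assumes sets: "sets \<mu> = sets borel"
  shows "emeasure \<mu> {\<xi>. norm \<xi> \<le> r}
      \<le> ennreal (1 + r\<^sup>2) * (\<integral>\<^sup>+ \<xi>. ennreal (1 / (1 + (norm \<xi>)\<^sup>2)) \<partial>\<mu>)"
proof -
  have ball_le_weight:
    "indicator {\<xi>. norm \<xi> \<le> r} \<xi> \<le> ennreal (1 + r\<^sup>2) * ennreal (1 / (1 + (norm \<xi>)\<^sup>2))"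
    for \<xi> :: 'a
  proof (cases "norm \<xi> \<le> r")
    case True
    then have "(norm \<xi>)\<^sup>2 \<le> r\<^sup>2"
      by (intro power_mono) auto
    then have "1 \<le> (1 + r\<^sup>2) * (1 / (1 + (norm \<xi>)\<^sup>2))"
      by (simp add: add_pos_nonneg le_divide_eq)
    then have "ennreal 1 \<le> ennreal (1 + r\<^sup>2) * ennreal (1 / (1 + (norm \<xi>)\<^sup>2))"
      by (subst ennreal_mult[symmetric]) (auto intro: ennreal_leI)
    then show ?thesis
      using True by simp
  qed simp
  have "emeasure \<mu> {\<xi>. norm \<xi> \<le> r} = (\<integral>\<^sup>+ \<xi>. indicator {\<xi>. norm \<xi> \<le> r} \<xi> \<partial>\<mu>)"
    using sets by simp
  also have "\<dots> \<le> (\<integral>\<^sup>+ \<xi>. ennreal (1 + r\<^sup>2) * ennreal (1 / (1 + (norm \<xi>)\<^sup>2)) \<partial>\<mu>)"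
    using ball_le_weight by (intro nn_integral_mono) simp
  also have "\<dots> = ennreal (1 + r\<^sup>2) * (\<integral>\<^sup>+ \<xi>. ennreal (1 / (1 + (norm \<xi>)\<^sup>2)) \<partial>\<mu>)"
    by (rule nn_integral_cmult) (simp add: measurable_cong_sets[OF sets refl])
  finally show ?thesis .
qed

text \<open>The integrability hypothesis makes \<open>\<mu>\<close> finite on balls, hence \<open>\<sigma>\<close>-finite; this is what
  allows integrating products coordinatewise against \<open>\<mu>^n\<close>.\<close>
lemma sigma_finite_if_weighted_mass_finite:
  fixes \<mu> :: "'a::real_normed_vector measure"
  assumes sets: "sets \<mu> = sets borel"
    and mass: "(\<integral>\<^sup>+ \<xi>. ennreal (1 / (1 + (norm \<xi>)\<^sup>2)) \<partial>\<mu>) < \<infinity>"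
  shows "sigma_finite_measure \<mu>"
proof
  let ?balls = "range (\<lambda>m::nat. {\<xi>::'a. norm \<xi> \<le> real m})"
  have "emeasure \<mu> {\<xi>. norm \<xi> \<le> r} < \<infinity>" for r
  proof -
    have "ennreal (1 + r\<^sup>2) * (\<integral>\<^sup>+ \<xi>. ennreal (1 / (1 + (norm \<xi>)\<^sup>2)) \<partial>\<mu>) < \<infinity>"
      using mass by (simp add: ennreal_mult_less_top)
    then show ?thesis
      by (rule le_less_trans[OF emeasure_ball_le_weighted_mass[OF sets]])
  qed
  then have "emeasure \<mu> B \<noteq> \<infinity>" if "B \<in> ?balls" for B
    using that by (auto simp: less_top[symmetric])
  moreover have "\<Union> ?balls = space \<mu>"
    using sets_eq_imp_space_eq[OF sets] by (auto intro: real_arch_simple)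
  moreover have "?balls \<subseteq> sets \<mu>"
    unfolding sets by auto
  ultimately show "\<exists>A. countable A \<and> A \<subseteq> sets \<mu> \<and> \<Union> A = space \<mu> \<and> (\<forall>a\<in>A. emeasure \<mu> a \<noteq> \<infinity>)"
    by (intro exI[of _ ?balls]) auto
qed

text \<open>The cut-off weight of a frequency: the indicator of the ball of radius \<open>N\<close> (if \<open>in_ball\<close>),
  or \<open>1/|\<xi>|^2\<close> outside that ball; their \<open>\<mu>\<close>-integrals are \<open>D_N\<close> and \<open>C_N\<close>.\<close>
definition cutoff_weight :: "real \<Rightarrow> bool \<Rightarrow> 'a::real_normed_vector \<Rightarrow> ennreal" where
  "cutoff_weight N in_ball \<xi> =
     (if in_ball then indicator {\<xi>. norm \<xi> \<le> N} \<xi>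
      else indicator {\<xi>. N \<le> norm \<xi>} \<xi> * ennreal (1 / (norm \<xi>)\<^sup>2))"

lemma borel_measurable_cutoff_weight [measurable]:
  "cutoff_weight N in_ball \<in> borel_measurable borel"
  unfolding cutoff_weight_def by measurable

lemma nn_integral_prod_cutoff_weights:
  fixes \<mu> :: "'a::euclidean_space measure"
  assumes sets: "sets \<mu> = sets borel" and "sigma_finite_measure \<mu>" and K: "K \<subseteq> {..<n}"
  shows "(\<integral>\<^sup>+ \<xi>. (\<Prod>i<n. cutoff_weight N (i \<in> K) (\<xi> i)) \<partial>PiM {..<n} (\<lambda>_. \<mu>))
       = D_N \<mu> N ^ card K * C_N \<mu> N ^ (n - card K)"
proof -
  interpret product_sigma_finite "\<lambda>_::nat. \<mu>"
    by (rule product_sigma_finite.intro) fact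
  have "(\<integral>\<^sup>+ \<xi>. (\<Prod>i<n. cutoff_weight N (i \<in> K) (\<xi> i)) \<partial>PiM {..<n} (\<lambda>_. \<mu>))
      = (\<Prod>i<n. \<integral>\<^sup>+ x. cutoff_weight N (i \<in> K) x \<partial>\<mu>)"
    by (rule product_nn_integral_prod) (auto simp: measurable_cong_sets[OF sets refl])
  also have "\<dots> = (\<Prod>i<n. if i \<in> K then D_N \<mu> N else C_N \<mu> N)"
    using sets by (intro prod.cong) (auto simp: cutoff_weight_def D_N_def C_N_def)
  also have "\<dots> = D_N \<mu> N ^ card K * C_N \<mu> N ^ (n - card K)"
    using K by (simp add: prod.If_cases Int_absorb1 Diff_eq[symmetric] card_Diff_subset finite_subset)
  finally show ?thesis .
qed

lemma sum_Pow_card: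
  fixes c :: "nat \<Rightarrow> 'b::comm_semiring_1"
  assumes "finite A"
  shows "(\<Sum>K\<in>Pow A. c (card K)) = (\<Sum>k\<le>card A. of_nat (card A choose k) * c k)"
proof -
  have "(\<Sum>K\<in>Pow A. c (card K)) = (\<Sum>k\<le>card A. \<Sum>K\<in>{K \<in> Pow A. card K = k}. c (card K))"
    using assms by (intro sum.group[symmetric]) (auto simp: card_mono)
  also have "\<dots> = (\<Sum>k\<le>card A. of_nat (card A choose k) * c k)"
    using assms by (intro sum.cong) (simp_all add: n_subsets)
  finally show ?thesis .
qed

text \<open>For fixed frequencies, the inner integral is bounded by the sum over all index sets \<open>K\<close>
  of \<open>t^|K| / |K|!\<close> times the product of the cut-off weights; only \<open>K = {i. norm (\<xi> i) \<le> N}\<close>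
  is needed.\<close>
lemma simplex_integral_le_cutoff_sum:
  fixes \<xi> :: "nat \<Rightarrow> 'a::real_normed_vector" and t N :: real
  assumes t: "0 \<le> t" and N: "0 < N"
  shows "(\<integral>\<^sup>+ w. indicator (simplex_set t n) w * ennreal (exp (- (\<Sum>i<n. w i * (norm (\<xi> i))\<^sup>2)))
            \<partial>PiM {..<n} (\<lambda>_. lborel))
      \<le> (\<Sum>K\<in>Pow {..<n}. ennreal (t ^ card K / fact (card K))
            * (\<Prod>i<n. cutoff_weight N (i \<in> K) (\<xi> i)))"
proof -
  define I where "I = {i \<in> {..<n}. norm (\<xi> i) \<le> N}"
  have I: "I \<subseteq> {..<n}"
    by (auto simp: I_def)
  have "(\<integral>\<^sup>+ w. indicator (simplex_set t n) w * ennreal (exp (- (\<Sum>i<n. w i * (norm (\<xi> i))\<^sup>2)))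
            \<partial>PiM {..<n} (\<lambda>_. lborel))
      \<le> ennreal (t ^ card I / fact (card I)) * (\<Prod>j\<in>{..<n} - I. ennreal (1 / (norm (\<xi> j))\<^sup>2))"
    using N by (intro simplex_integral_le I t) (auto simp: I_def)
  also have "(\<Prod>j\<in>{..<n} - I. ennreal (1 / (norm (\<xi> j))\<^sup>2)) = (\<Prod>i<n. cutoff_weight N (i \<in> I) (\<xi> i))"
  proof -
    have "(\<Prod>i<n. cutoff_weight N (i \<in> I) (\<xi> i))
        = (\<Prod>i<n. if i \<in> I then 1 else ennreal (1 / (norm (\<xi> i))\<^sup>2))"
      by (intro prod.cong) (auto simp: cutoff_weight_def I_def)
    then show ?thesis
      by (simp add: prod.If_cases Diff_eq)
  qed
  also have "ennreal (t ^ card I / fact (card I)) * (\<Prod>i<n. cutoff_weight N (i \<in> I) (\<xi> i))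
      \<le> (\<Sum>K\<in>Pow {..<n}. ennreal (t ^ card K / fact (card K)) * (\<Prod>i<n. cutoff_weight N (i \<in> K) (\<xi> i)))"
    using I by (intro member_le_sum) auto
  finally show ?thesis .
qed

theorem mainTheorem2:
  fixes \<mu> :: "'a::euclidean_space measure" and n :: nat and t N :: real
  assumes "sets \<mu> = sets borel"
    and "(\<integral>\<^sup>+ \<xi>. ennreal (1 / (1 + (norm \<xi>)^2)) \<partial>\<mu>) < \<infinity>"
    and "n \<ge> 1" and "t > 0" and "N > 0"
  shows "(\<integral>\<^sup>+ \<xi>. (\<integral>\<^sup>+ w. indicator (simplex_set t n) w
              * ennreal (exp (- (\<Sum>i<n. w i * (norm (\<xi> i))^2)))
            \<partial>(PiM {..<n} (\<lambda>_. lborel)))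
          \<partial>(PiM {..<n} (\<lambda>_. \<mu>)))
    \<le> (\<Sum>k\<le>n. of_nat (n choose k) * ennreal (t ^ k / fact k)
              * (D_N \<mu> N) ^ k * (2 * C_N \<mu> N) ^ (n - k))"
proof -
  have sigma_finite: "sigma_finite_measure \<mu>"
    using assms(1,2) by (rule sigma_finite_if_weighted_mass_finite)
  define c where "c k = ennreal (t ^ k / fact k) * (D_N \<mu> N ^ k * C_N \<mu> N ^ (n - k))" for k
  have "(\<integral>\<^sup>+ \<xi>. (\<integral>\<^sup>+ w. indicator (simplex_set t n) w
              * ennreal (exp (- (\<Sum>i<n. w i * (norm (\<xi> i))^2))) \<partial>(PiM {..<n} (\<lambda>_. lborel)))
          \<partial>(PiM {..<n} (\<lambda>_. \<mu>)))
      \<le> (\<integral>\<^sup>+ \<xi>. (\<Sum>K\<in>Pow {..<n}. ennreal (t ^ card K / fact (card K))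
            * (\<Prod>i<n. cutoff_weight N (i \<in> K) (\<xi> i))) \<partial>(PiM {..<n} (\<lambda>_. \<mu>)))"
    using assms(4,5) by (intro nn_integral_mono simplex_integral_le_cutoff_sum) auto
  also have "\<dots> = (\<Sum>K\<in>Pow {..<n}. c (card K))"
    using assms(1) sigma_finite
    by (subst nn_integral_sum) (auto simp: c_def nn_integral_cmult measurable_cong_sets[OF assms(1) refl]
        nn_integral_prod_cutoff_weights intro!: sum.cong)
  also have "\<dots> = (\<Sum>k\<le>n. of_nat (n choose k) * c k)"
    using sum_Pow_card[of "{..<n}" c] by simp
  also have "\<dots> \<le> (\<Sum>k\<le>n. of_nat (n choose k) * ennreal (t ^ k / fact k)
              * (D_N \<mu> N) ^ k * (2 * C_N \<mu> N) ^ (n - k))"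
    unfolding c_def mult.assoc
    by (intro sum_mono mult_left_mono power_mono) (auto simp: mult_2 add_increasing)
  finally show ?thesis .
qed

end
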